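(* Under the hypotheses of Lemma 2 (an RB function $H$ for $\mathcal X_r$, a constant $\eta\ge\max_{p\in\mathcal Q}H(\mathbf f[p])$, and a $1-\epsilon$ confidence region $\mathcal V$ with associated set $V$, for a given $n$-round device behavior $P_{A\mid X}$ and input distribution $\Pi$), there exists a conditional distribution $\tilde P(\cdot\mid\vec x)$ on $\mathcal A^n\cup\{\perp\}$ (with $\perp$ an additional "abort" symbol) such that, setting $\tilde P(\vec a,\vec x)=\tilde P(\vec a\mid\vec x)\Pi(\vec x)$ and $P(\perp\mid\vec x)=0$, $$\frac12\sum_{\vec a\in\mathcal A^n\cup\{\perp\},\vec x}\big|\tilde P(\vec a,\vec x)-P(\vec a,\vec x)\big|\le\epsilon,$$ and for every $\vec x\in\mathcal X^n$ and every $\vec a\in\mathcal A^n$ (i.e. $\vec a\neq\perp$), $$-\log_2\tilde P(\vec a\mid\vec x)\ge nH(\mathcal V(\vec a,\vec x,\epsilon))-\nu(\vec x)\eta$$ (with $-\log_20=+\infty$).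
   Context: Setting. A Bell device consists of $k$ boxes with finite input sets $\mathcal X_i$ and output sets $\mathcal A_i$; $\mathcal X=\prod_i\mathcal X_i$, $\mathcal A=\prod_i\mathcal A_i$. Single-round behaviors $p=(p(a\mid x))$; $\mathcal Q$ the set of quantum behaviors. Bell expressions $f$ with $f[p]=\sum_{a,x}f(a,x)p(a\mid x)$; $\mathbf f=(f_1,\dots,f_t)$, $\mathbf f[\mathcal Q]=\{\mathbf f[p]:p\in\mathcal Q\}$. $n$-round device behavior: $P(\vec a\mid\vec x)=\prod_{j=1}^np_{\vec a_{j-1},\vec x_{j-1}}(a_j\mid x_j)$ with each $p_{\vec a_{j-1},\vec x_{j-1}}\in\mathcal Q$ ($\vec a_j,\vec x_j$ the length-$j$ prefixes). Inputs drawn with $\Pi(\vec x)=\prod_j\pi(x_j)$; $P(\vec a,\vec x)=P(\vec a\mid\vec x)\Pi(\vec x)$. RB function for nonempty $\mathcal X_r\subseteq\mathcal X$: $H:\mathbf f[\mathcal Q]\to[0,\log_2|\mathcal A|]$ with (1) $\min_{a\in\mathcal A,x\in\mathcal X_r}(-\log_2p(a\mid x))\ge H(\mathbf f[p])$ for all $p\in\mathcal Q$, (2) $H$ convex along $\mathbf f[\mathcal Q]$: $H(q\mathbf f[p_1]+(1-q)\mathbf f[p_2])\le qH(\mathbf f[p_1])+(1-q)H(\mathbf f[p_2])$. For $\mathcal V\subseteq\mathbb R^t$, $H(\mathcal V)$ is a fixed number $\le\inf\{H(\mathbf y):\mathbf y\in\mathbf f[\mathcal Q]\cap\mathcal V\}$,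 equal to $0$ if the intersection is empty. $\nu(\vec x)=\#\{j:x_j\notin\mathcal X_r\}$. A $1-\epsilon$ confidence region is an assignment $(\vec a,\vec x)\mapsto\mathcal V(\vec a,\vec x,\epsilon)\subseteq\mathbb R^t$ with $\Pr_{P_{AX}}[\frac1n\sum_j\mathbf f[p_{\vec a_{j-1},\vec x_{j-1}}]\in\mathcal V(\vec a,\vec x,\epsilon)]\ge1-\epsilon$ for every $n$-round device behavior; $V$ is the set of $(\vec a,\vec x)$ for which this membership holds. *)

theory Defs
  imports "HOL-Analysis.Analysis"
begin

text \<open>Outputs of the whole Bell device (the product set A) are the finite type 'a,
inputs (the product set X) the finite type 'x. A single-round behavior is
p :: 'a => 'x => real with p a x = p(a|x). Bell expressions are indexed by the
finite type 't, so f[p] is a vector in real^'t.\<close>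

definition behavior :: "('a::finite \<Rightarrow> 'x::finite \<Rightarrow> real) \<Rightarrow> bool" where
  "behavior p \<longleftrightarrow> (\<forall>a x. 0 \<le> p a x) \<and> (\<forall>x. (\<Sum>a\<in>UNIV. p a x) = 1)"

definition bell_vec ::
  "('t::finite \<Rightarrow> 'a::finite \<Rightarrow> 'x::finite \<Rightarrow> real) \<Rightarrow> ('a \<Rightarrow> 'x \<Rightarrow> real) \<Rightarrow> real^'t" where
  "bell_vec f p = (\<chi> s. \<Sum>a\<in>UNIV. \<Sum>x\<in>UNIV. f s a x * p a x)"

definition neglog2 :: "real \<Rightarrow> ereal" where
  "neglog2 u = (if u = 0 then \<infinity> else ereal (- log 2 u))"

definition RB_function ::
  "('a::finite \<Rightarrow> 'x::finite \<Rightarrow> real) set \<Rightarrow> ('t::finite \<Rightarrow> 'a \<Rightarrow> 'x \<Rightarrow> real) \<Rightarrow> 'x set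
   \<Rightarrow> (real^'t \<Rightarrow> real) \<Rightarrow> bool" where
  "RB_function Q f Xr H \<longleftrightarrow>
     Xr \<noteq> {} \<and>
     (\<forall>p\<in>Q. 0 \<le> H (bell_vec f p) \<and> H (bell_vec f p) \<le> log 2 (real (card (UNIV::'a set)))) \<and>
     (\<forall>p\<in>Q. \<forall>a. \<forall>x\<in>Xr. ereal (H (bell_vec f p)) \<le> neglog2 (p a x)) \<and>
     (\<forall>p1\<in>Q. \<forall>p2\<in>Q. \<forall>q\<in>{0..1}.
        H (q *\<^sub>R bell_vec f p1 + (1 - q) *\<^sub>R bell_vec f p2)
          \<le> q * H (bell_vec f p1) + (1 - q) * H (bell_vec f p2))"

text \<open>HV V plays the role of H(V): a fixed number below H on f[Q] \<inter> V, and 0 if that is empty.\<close>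
definition HV_of ::
  "('a::finite \<Rightarrow> 'x::finite \<Rightarrow> real) set \<Rightarrow> ('t::finite \<Rightarrow> 'a \<Rightarrow> 'x \<Rightarrow> real)
   \<Rightarrow> (real^'t \<Rightarrow> real) \<Rightarrow> ((real^'t) set \<Rightarrow> real) \<Rightarrow> bool" where
  "HV_of Q f H HV \<longleftrightarrow>
     (\<forall>V. (\<forall>y \<in> bell_vec f ` Q \<inter> V. HV V \<le> H y) \<and> (bell_vec f ` Q \<inter> V = {} \<longrightarrow> HV V = 0))"

definition nu :: "'x set \<Rightarrow> 'x list \<Rightarrow> nat" where
  "nu Xr xs = card {j. j < length xs \<and> xs ! j \<notin> Xr}"

text \<open>n-round device behavior: pp as xs is the round-(j+1) behavior given the
length-j prefixes as, xs; it must lie in Q.\<close>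
definition device_behavior ::
  "('a::finite \<Rightarrow> 'x::finite \<Rightarrow> real) set \<Rightarrow> nat \<Rightarrow> ('a list \<Rightarrow> 'x list \<Rightarrow> 'a \<Rightarrow> 'x \<Rightarrow> real) \<Rightarrow> bool" where
  "device_behavior Q n pp \<longleftrightarrow>
     (\<forall>as xs. length as = length xs \<longrightarrow> length as < n \<longrightarrow> pp as xs \<in> Q)"

definition dev_prob ::
  "nat \<Rightarrow> ('a list \<Rightarrow> 'x list \<Rightarrow> 'a \<Rightarrow> 'x \<Rightarrow> real) \<Rightarrow> 'a list \<Rightarrow> 'x list \<Rightarrow> real" where
  "dev_prob n pp as xs = (\<Prod>j<n. pp (take j as) (take j xs) (as ! j) (xs ! j))"

definition input_prob :: "('x \<Rightarrow> real) \<Rightarrow> 'x list \<Rightarrow> real" where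
  "input_prob \<pi> xs = prod_list (map \<pi> xs)"

definition avg_bell ::
  "('t::finite \<Rightarrow> 'a::finite \<Rightarrow> 'x::finite \<Rightarrow> real) \<Rightarrow> nat
   \<Rightarrow> ('a list \<Rightarrow> 'x list \<Rightarrow> 'a \<Rightarrow> 'x \<Rightarrow> real) \<Rightarrow> 'a list \<Rightarrow> 'x list \<Rightarrow> real^'t" where
  "avg_bell f n pp as xs = (1 / real n) *\<^sub>R (\<Sum>j<n. bell_vec f (pp (take j as) (take j xs)))"

definition confidence_region ::
  "('a::finite \<Rightarrow> 'x::finite \<Rightarrow> real) set \<Rightarrow> ('t::finite \<Rightarrow> 'a \<Rightarrow> 'x \<Rightarrow> real) \<Rightarrow> ('x \<Rightarrow> real)
   \<Rightarrow> nat \<Rightarrow> real \<Rightarrow> ('a list \<Rightarrow> 'x list \<Rightarrow> real \<Rightarrow> (real^'t) set) \<Rightarrow> bool" where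
  "confidence_region Q f \<pi> n \<epsilon> Vr \<longleftrightarrow>
     (\<forall>pp. device_behavior Q n pp \<longrightarrow>
        (\<Sum>(as, xs) \<in> {(as, xs). length as = n \<and> length xs = n \<and> avg_bell f n pp as xs \<in> Vr as xs \<epsilon>}.
            dev_prob n pp as xs * input_prob \<pi> xs) \<ge> 1 - \<epsilon>)"

text \<open>Outcome space A^n \<union> {abort}: None is the abort symbol.\<close>
definition outcomes :: "nat \<Rightarrow> 'a list option set" where
  "outcomes n = insert None (Some ` {as. length as = n})"

definition ext_prob ::
  "nat \<Rightarrow> ('a list \<Rightarrow> 'x list \<Rightarrow> 'a \<Rightarrow> 'x \<Rightarrow> real) \<Rightarrow> 'x list \<Rightarrow> 'a list option \<Rightarrow> real" where
  "ext_prob n pp xs oc = (case oc of None \<Rightarrow> 0 | Some as \<Rightarrow> dev_prob n pp as xs)"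

end

theory Submission
  imports Defs
begin

text \<open>Replace the device by the distribution that aborts whenever the observed Bell
values fall outside the confidence region. This costs at most the mass of the
complement, i.e. \<open>\<epsilon>\<close>, in statistical distance. On a non-aborting outcome the
probability is a product of single-round probabilities; each factor on an input in
\<open>Xr\<close> is bounded by the RB property, each other factor by 1 at the price \<open>\<eta>\<close>, and
convexity of \<open>H\<close> turns the sum of the single-round values into \<open>n\<close> times the value at
the average behavior, which lies in the confidence region.\<close>

lemma finite_lists_length: "finite {xs::'a::finite list. length xs = n}"
  using finite_lists_length_eq[of "UNIV::'a set" n] by simp

lemma sum_lists_length_Suc:
  "(\<Sum>xs\<in>{xs::'a::finite list. length xs = Suc n}. g xs)
   = (\<Sum>ys\<in>{ys. length ys = n}. \<Sum>y\<in>UNIV. g (ys @ [y]))"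
proof -
  have snoc: "{xs::'a list. length xs = Suc n} = (\<lambda>(ys, y). ys @ [y]) ` ({ys. length ys = n} \<times> UNIV)"
  proof (intro equalityI subsetI)
    fix xs :: "'a list" assume "xs \<in> {xs. length xs = Suc n}"
    then have "xs = butlast xs @ [last xs]" "length (butlast xs) = n"
      by (auto simp del: length_greater_0_conv intro: append_butlast_last_id[symmetric])
    then show "xs \<in> (\<lambda>(ys, y). ys @ [y]) ` ({ys. length ys = n} \<times> UNIV)"
      by (intro image_eqI[of _ _ "(butlast xs, last xs)"]) auto
  qed auto
  have "inj_on (\<lambda>(ys, y). ys @ [y]) ({ys::'a list. length ys = n} \<times> UNIV)"
    by (auto simp: inj_on_def)
  then show ?thesis
    by (simp add: snoc sum.reindex case_prod_unfold sum.cartesian_product)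
qed

lemma sum_pairs_filter:
  assumes "finite A" "finite B"
  shows "(\<Sum>(a, b) \<in> {(a, b). a \<in> A \<and> b \<in> B \<and> E a b}. g a b) = (\<Sum>b\<in>B. \<Sum>a\<in>{a\<in>A. E a b}. g a b)"
proof -
  have "{(a, b). a \<in> A \<and> b \<in> B \<and> E a b} = (\<lambda>(b, a). (a, b)) ` (SIGMA b:B. {a\<in>A. E a b})"
    by auto
  moreover have "inj_on (\<lambda>(b, a). (a, b)) (SIGMA b:B. {a\<in>A. E a b})"
    by (auto simp: inj_on_def)
  ultimately show ?thesis
    using assms by (simp add: sum.reindex sum.Sigma case_prod_unfold)
qed

lemma half_sum_deficit_le:
  assumes "sum w X = (1::real)" "1 - \<epsilon> \<le> (\<Sum>x\<in>X. w x * m x)"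
  shows "(1 / 2) * (\<Sum>x\<in>X. 2 * (w x - w x * m x)) \<le> \<epsilon>"
proof -
  have "(\<Sum>x\<in>X. 2 * (w x - w x * m x)) = 2 * (sum w X - (\<Sum>x\<in>X. w x * m x))"
    by (simp only: sum_distrib_left[symmetric] sum_subtractf)
  then have "(1 / 2) * (\<Sum>x\<in>X. 2 * (w x - w x * m x)) = sum w X - (\<Sum>x\<in>X. w x * m x)"
    by simp
  with assms show ?thesis by linarith
qed

lemma sum_input_prob:
  "(\<Sum>xs\<in>{xs::'x::finite list. length xs = n}. input_prob \<pi> xs) = (\<Sum>x\<in>UNIV. \<pi> x) ^ n"
proof (induction n)
  case 0
  have "{xs::'x list. length xs = 0} = {[]}" by auto
  then show ?case by (simp add: input_prob_def)
next
  case (Suc n)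
  have "(\<Sum>xs\<in>{xs::'x list. length xs = Suc n}. input_prob \<pi> xs)
      = (\<Sum>ys\<in>{ys::'x list. length ys = n}. input_prob \<pi> ys * (\<Sum>x\<in>UNIV. \<pi> x))"
    by (simp add: sum_lists_length_Suc input_prob_def sum_distrib_left)
  also have "\<dots> = (\<Sum>ys\<in>{ys::'x list. length ys = n}. input_prob \<pi> ys) * (\<Sum>x\<in>UNIV. \<pi> x)"
    by (rule sum_distrib_right[symmetric])
  finally show ?case using Suc.IH by simp
qed

lemma input_prob_nonneg: "(\<And>x. 0 \<le> \<pi> x) \<Longrightarrow> 0 \<le> input_prob \<pi> xs"
  unfolding input_prob_def by (induction xs) auto

lemma behavior_nonneg: "behavior p \<Longrightarrow> 0 \<le> p a x"
  by (simp add: behavior_def)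

lemma behavior_le_one:
  assumes "behavior p"
  shows "p a x \<le> 1"
proof -
  have "p a x \<le> (\<Sum>a\<in>UNIV. p a x)"
    by (rule member_le_sum) (use assms in \<open>auto simp: behavior_def\<close>)
  with assms show ?thesis by (simp add: behavior_def)
qed

lemma device_behavior_round:
  "device_behavior Q n pp \<Longrightarrow> length as = n \<Longrightarrow> length xs = n \<Longrightarrow> j < n
   \<Longrightarrow> pp (take j as) (take j xs) \<in> Q"
  by (simp add: device_behavior_def)

lemma dev_prob_snoc:
  assumes "length ys = m"
  shows "dev_prob (Suc m) pp (ys @ [y]) xs = dev_prob m pp ys xs * pp ys (take m xs) y (xs ! m)"
proof -
  have "(\<Prod>j<m. pp (take j (ys @ [y])) (take j xs) ((ys @ [y]) ! j) (xs ! j))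
      = (\<Prod>j<m. pp (take j ys) (take j xs) (ys ! j) (xs ! j))"
    by (rule prod.cong) (auto simp: assms nth_append)
  then show ?thesis by (simp add: dev_prob_def assms nth_append)
qed

lemma dev_prob_nonneg:
  assumes "\<forall>p\<in>Q. behavior p" "device_behavior Q n pp" "length as = n" "length xs = n"
  shows "0 \<le> dev_prob n pp as xs"
proof -
  have "behavior (pp (take j as) (take j xs))" if "j < n" for j
    using assms device_behavior_round[OF assms(2-4) that] by blast
  then show ?thesis
    unfolding dev_prob_def by (auto intro: prod_nonneg behavior_nonneg)
qed

lemma sum_dev_prob:
  assumes Q_behaviors: "\<forall>p\<in>Q. behavior p" and dev: "device_behavior Q N pp"
    and "m \<le> N" "m \<le> length xs"
  shows "(\<Sum>as\<in>{as::'a::finite list. length as = m}. dev_prob m pp as (xs::'x::finite list)) = 1"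
  using assms(3,4)
proof (induction m)
  case 0
  have "{as::'a list. length as = 0} = {[]}" by auto
  then show ?case by (simp add: dev_prob_def)
next
  case (Suc m)
  have round: "(\<Sum>y\<in>UNIV. pp ys (take m xs) y (xs ! m)) = 1" if "length ys = m" for ys :: "'a list"
    using dev Suc.prems that Q_behaviors by (auto simp: device_behavior_def behavior_def)
  have "(\<Sum>as\<in>{as::'a list. length as = Suc m}. dev_prob (Suc m) pp as xs)
      = (\<Sum>ys\<in>{ys::'a list. length ys = m}. dev_prob m pp ys xs * (\<Sum>y\<in>UNIV. pp ys (take m xs) y (xs ! m)))"
    by (simp add: sum_lists_length_Suc dev_prob_snoc sum_distrib_left)
  also have "\<dots> = (\<Sum>ys\<in>{ys::'a list. length ys = m}. dev_prob m pp ys xs)"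
    by (rule sum.cong) (simp_all add: round)
  finally show ?case using Suc by simp
qed

lemma bell_vec_convex_comb:
  "bell_vec f (\<lambda>a x. c * g a x + d * h a x) = c *\<^sub>R bell_vec f g + d *\<^sub>R bell_vec f h"
  by (simp add: bell_vec_def vec_eq_iff algebra_simps sum.distrib sum_distrib_left)

lemma bell_vec_average:
  "bell_vec f (\<lambda>a x. (1 / real m) * (\<Sum>j<m. P j a x)) = (1 / real m) *\<^sub>R (\<Sum>j<m. bell_vec f (P j))"
  by (simp add: bell_vec_def vec_eq_iff sum_component sum_distrib_left sum_distrib_right
      algebra_simps sum.swap[of _ "{..<m}"])

lemma average_Suc_split:
  assumes "0 < m"
  shows "(\<lambda>a x. (1 / real (Suc m)) * (\<Sum>j<Suc m. P j a x))
    = (\<lambda>a x. (real m / real (Suc m)) * ((1 / real m) * (\<Sum>j<m. P j a x))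
              + (1 - real m / real (Suc m)) * P m a x)"
proof -
  have "real m / real (Suc m) * (1 / real m * s) = 1 / real (Suc m) * s" for s
    using assms by simp
  moreover have "1 - real m / real (Suc m) = 1 / real (Suc m)"
    by (simp add: field_simps)
  ultimately show ?thesis
    by (simp only: sum.lessThan_Suc distrib_left)
qed

lemma RB_function_average:
  fixes Q :: "('a::finite \<Rightarrow> 'x::finite \<Rightarrow> real) set" and f :: "'t::finite \<Rightarrow> 'a \<Rightarrow> 'x \<Rightarrow> real"
  assumes Q_convex: "\<forall>p1\<in>Q. \<forall>p2\<in>Q. \<forall>q\<in>{0..1}. (\<lambda>a x. q * p1 a x + (1 - q) * p2 a x) \<in> Q"
    and RB: "RB_function Q f Xr H"
    and "0 < m" "\<forall>j<m. P j \<in> Q"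
  shows "(\<lambda>a x. (1 / real m) * (\<Sum>j<m. P j a x)) \<in> Q \<and>
    real m * H (bell_vec f (\<lambda>a x. (1 / real m) * (\<Sum>j<m. P j a x))) \<le> (\<Sum>j<m. H (bell_vec f (P j)))"
  using assms(3,4)
proof (induction m)
  case 0 then show ?case by simp
next
  case (Suc m)
  show ?case
  proof (cases "m = 0")
    case True
    then show ?thesis using Suc.prems by simp
  next
    case False
    define A where "A = (\<lambda>a x. (1 / real m) * (\<Sum>j<m. P j a x))"
    define q where "q = real m / real (Suc m)"
    from Suc False have A: "A \<in> Q" "real m * H (bell_vec f A) \<le> (\<Sum>j<m. H (bell_vec f (P j)))"
      unfolding A_def by auto
    have Pm: "P m \<in> Q" using Suc.prems by simp
    have q: "q \<in> {0..1}" "real (Suc m) * q = real m" "real (Suc m) * (1 - q) = 1"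
      unfolding q_def by (auto simp: field_simps)
    have split_avg:
      "(\<lambda>a x. (1 / real (Suc m)) * (\<Sum>j<Suc m. P j a x)) = (\<lambda>a x. q * A a x + (1 - q) * P m a x)"
      using average_Suc_split[of m P] False unfolding A_def q_def by simp
    have H_le: "H (q *\<^sub>R bell_vec f A + (1 - q) *\<^sub>R bell_vec f (P m))
        \<le> q * H (bell_vec f A) + (1 - q) * H (bell_vec f (P m))"
      using RB A(1) Pm q(1) unfolding RB_function_def by blast
    have "real (Suc m) * H (bell_vec f (\<lambda>a x. q * A a x + (1 - q) * P m a x))
        = real (Suc m) * H (q *\<^sub>R bell_vec f A + (1 - q) *\<^sub>R bell_vec f (P m))"
      by (simp only: bell_vec_convex_comb)
    also have "\<dots> \<le> real (Suc m) * q * H (bell_vec f A) + real (Suc m) * (1 - q) * H (bell_vec f (P m))"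
      using mult_left_mono[OF H_le, of "real (Suc m)"] by (simp add: algebra_simps)
    also have "\<dots> \<le> (\<Sum>j<Suc m. H (bell_vec f (P j)))"
      using q(2,3) A(2) by simp
    finally show ?thesis
      using Q_convex A(1) Pm q(1) unfolding split_avg by blast
  qed
qed

lemma HV_of_le: "HV_of Q f H HV \<Longrightarrow> p \<in> Q \<Longrightarrow> bell_vec f p \<in> V \<Longrightarrow> HV V \<le> H (bell_vec f p)"
  by (auto simp: HV_of_def)

lemma HV_le_average_rate:
  assumes Q_convex: "\<forall>p1\<in>Q. \<forall>p2\<in>Q. \<forall>q\<in>{0..1}. (\<lambda>a x. q * p1 a x + (1 - q) * p2 a x) \<in> Q"
    and RB: "RB_function Q f Xr H" and HV: "HV_of Q f H HV"
    and dev: "device_behavior Q n pp" and "length as = n" "length xs = n"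
    and in_region: "avg_bell f n pp as xs \<in> V"
  shows "real n * HV V \<le> (\<Sum>j<n. H (bell_vec f (pp (take j as) (take j xs))))"
proof (cases "n = 0")
  case False
  define avg where "avg = (\<lambda>a x. (1 / real n) * (\<Sum>j<n. pp (take j as) (take j xs) a x))"
  have avg: "avg \<in> Q \<and> real n * H (bell_vec f avg) \<le> (\<Sum>j<n. H (bell_vec f (pp (take j as) (take j xs))))"
    unfolding avg_def
    by (rule RB_function_average[OF Q_convex RB, of n "\<lambda>j. pp (take j as) (take j xs)"])
      (use False device_behavior_round[OF dev assms(5,6)] in auto)
  have "bell_vec f avg = avg_bell f n pp as xs"
    unfolding avg_def bell_vec_average avg_bell_def ..
  with in_region have "bell_vec f avg \<in> V" by simp
  then have "HV V \<le> H (bell_vec f avg)"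
    by (rule HV_of_le[OF HV conjunct1[OF avg]])
  then have "real n * HV V \<le> real n * H (bell_vec f avg)"
    by (rule mult_left_mono) simp
  with avg show ?thesis by linarith
qed simp

lemma RB_round_bound:
  assumes RB: "RB_function Q f Xr H" and "p \<in> Q" "H (bell_vec f p) \<le> \<eta>"
    and "0 < p a x" "p a x \<le> 1"
  shows "H (bell_vec f p) - (if x \<notin> Xr then \<eta> else 0) \<le> - log 2 (p a x)"
proof (cases "x \<in> Xr")
  case True
  then have "ereal (H (bell_vec f p)) \<le> neglog2 (p a x)"
    using RB \<open>p \<in> Q\<close> unfolding RB_function_def by blast
  with True \<open>0 < p a x\<close> show ?thesis by (simp add: neglog2_def)
next
  case False
  have "log 2 (p a x) \<le> 0" using assms(4,5) by simp
  with False assms(3) show ?thesis by simp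
qed

lemma sum_nth_notin_eq_nu:
  "(\<Sum>j<length xs. if xs ! j \<notin> Xr then c else 0) = real (nu Xr xs) * c"
proof -
  have "{j\<in>{..<length xs}. xs ! j \<notin> Xr} = {j. j < length xs \<and> xs ! j \<notin> Xr}" by auto
  then show ?thesis
    using sum.inter_filter[of "{..<length xs}" "\<lambda>_. c" "\<lambda>j. xs ! j \<notin> Xr"] by (simp add: nu_def)
qed

lemma neglog2_dev_prob_ge:
  assumes Q_behaviors: "\<forall>p\<in>Q. behavior p" and RB: "RB_function Q f Xr H"
    and eta: "\<forall>p\<in>Q. H (bell_vec f p) \<le> \<eta>"
    and dev: "device_behavior Q n pp" and la: "length as = n" and lx: "length xs = n"
  shows "ereal ((\<Sum>j<n. H (bell_vec f (pp (take j as) (take j xs)))) - real (nu Xr xs) * \<eta>)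
    \<le> neglog2 (dev_prob n pp as xs)"
proof (cases "dev_prob n pp as xs = 0")
  case nonzero: False
  define p where "p j = pp (take j as) (take j xs)" for j
  have pQ: "p j \<in> Q" if "j < n" for j
    unfolding p_def using device_behavior_round[OF dev la lx that] .
  have pos: "0 < p j (as ! j) (xs ! j)" if "j < n" for j
  proof -
    have "p j (as ! j) (xs ! j) \<noteq> 0" using nonzero that by (simp add: dev_prob_def p_def)
    moreover have "0 \<le> p j (as ! j) (xs ! j)" using Q_behaviors pQ[OF that] behavior_nonneg by blast
    ultimately show ?thesis by simp
  qed
  have round: "H (bell_vec f (p j)) - (if xs ! j \<notin> Xr then \<eta> else 0) \<le> - log 2 (p j (as ! j) (xs ! j))"
    if "j < n" for j
  proof -
    have "behavior (p j)" using Q_behaviors pQ[OF that] by blast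
    then have "p j (as ! j) (xs ! j) \<le> 1" by (rule behavior_le_one)
    then show ?thesis
      using RB_round_bound[OF RB pQ[OF that] _ pos[OF that]] eta pQ[OF that] by blast
  qed
  have "(\<Sum>j<n. H (bell_vec f (p j)) - (if xs ! j \<notin> Xr then \<eta> else 0))
      \<le> (\<Sum>j<n. - log 2 (p j (as ! j) (xs ! j)))"
    using round by (intro sum_mono) simp
  also have "\<dots> = - log 2 (dev_prob n pp as xs)"
  proof -
    have "ln (\<Prod>j<n. p j (as ! j) (xs ! j)) = (\<Sum>j<n. ln (p j (as ! j) (xs ! j)))"
      by (rule ln_prod) (use pos in force)+
    then show ?thesis by (simp add: dev_prob_def p_def log_def sum_divide_distrib sum_negf)
  qed
  finally show ?thesis
    using nonzero sum_nth_notin_eq_nu[where xs = xs and Xr = Xr and c = \<eta>] lx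
    by (simp add: p_def neglog2_def sum_subtractf)
qed (simp add: neglog2_def)

definition abort_outside :: "'b set \<Rightarrow> ('b \<Rightarrow> bool) \<Rightarrow> ('b \<Rightarrow> real) \<Rightarrow> 'b option \<Rightarrow> real" where
  "abort_outside S E p oc =
     (case oc of None \<Rightarrow> 1 - sum p {b\<in>S. E b} | Some b \<Rightarrow> if E b then p b else 0)"

lemma sum_insert_None:
  "finite S \<Longrightarrow> (\<Sum>oc\<in>insert None (Some ` S). g oc) = g None + (\<Sum>b\<in>S. g (Some b))"
  by (simp add: sum.reindex)

locale distribution_on =
  fixes S :: "'b set" and p :: "'b \<Rightarrow> real"
  assumes finite: "finite S" and nonneg: "\<And>b. b \<in> S \<Longrightarrow> 0 \<le> p b" and total: "sum p S = 1"
begin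

lemma sum_outside: "(\<Sum>b\<in>S. if E b then 0 else p b) = 1 - sum p {b\<in>S. E b}"
proof -
  have "sum p S = (\<Sum>b\<in>S. (if E b then p b else 0) + (if E b then 0 else p b))"
    by (rule sum.cong) auto
  also have "\<dots> = sum p {b\<in>S. E b} + (\<Sum>b\<in>S. if E b then 0 else p b)"
    by (simp add: sum.distrib sum.inter_filter finite)
  finally show ?thesis using total by simp
qed

lemma mass_le_one: "sum p {b\<in>S. E b} \<le> 1"
  using sum_outside[of E] sum_nonneg[of S "\<lambda>b. if E b then 0 else p b"] nonneg by auto

lemma abort_outside_nonneg: "0 \<le> abort_outside S E p oc" if "oc \<in> insert None (Some ` S)"
  using that mass_le_one nonneg by (auto simp: abort_outside_def)

lemma sum_abort_outside: "(\<Sum>oc\<in>insert None (Some ` S). abort_outside S E p oc) = 1"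
  unfolding sum_insert_None[OF finite] by (simp add: abort_outside_def finite sum.inter_filter)

lemma abort_outside_dist:
  "(\<Sum>oc\<in>insert None (Some ` S). \<bar>abort_outside S E p oc - case_option 0 p oc\<bar>)
   = 2 * (1 - sum p {b\<in>S. E b})"
proof -
  have "\<bar>abort_outside S E p None - 0\<bar> = 1 - sum p {b\<in>S. E b}"
    using mass_le_one[of E] by (simp add: abort_outside_def)
  moreover have "(\<Sum>b\<in>S. \<bar>abort_outside S E p (Some b) - p b\<bar>) = 1 - sum p {b\<in>S. E b}"
    unfolding sum_outside[symmetric] by (rule sum.cong) (auto simp: abort_outside_def nonneg)
  ultimately show ?thesis
    unfolding sum_insert_None[OF finite] by simp
qed

end

lemma distribution_on_dev_prob:
  assumes "\<forall>p\<in>Q. behavior p" "device_behavior Q n pp" "length xs = n"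
  shows "distribution_on {as. length as = n} (\<lambda>as. dev_prob n pp as xs)"
  using finite_lists_length dev_prob_nonneg[OF assms(1,2)] sum_dev_prob[OF assms(1,2), of n xs] assms(3)
  by unfold_locales auto

definition truncated_device ::
  "('t::finite \<Rightarrow> 'a::finite \<Rightarrow> 'x::finite \<Rightarrow> real) \<Rightarrow> nat \<Rightarrow> ('a list \<Rightarrow> 'x list \<Rightarrow> 'a \<Rightarrow> 'x \<Rightarrow> real)
   \<Rightarrow> ('a list \<Rightarrow> 'x list \<Rightarrow> real \<Rightarrow> (real^'t) set) \<Rightarrow> real \<Rightarrow> 'x list \<Rightarrow> 'a list option \<Rightarrow> real" where
  "truncated_device f n pp Vr \<epsilon> xs = abort_outside {as. length as = n}
     (\<lambda>as. avg_bell f n pp as xs \<in> Vr as xs \<epsilon>) (\<lambda>as. dev_prob n pp as xs)"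

lemma truncated_device_distribution:
  assumes "\<forall>p\<in>Q. behavior p" "device_behavior Q n pp" "length xs = n"
  shows "(\<forall>oc\<in>outcomes n. 0 \<le> truncated_device f n pp Vr \<epsilon> xs oc)
    \<and> (\<Sum>oc\<in>outcomes n. truncated_device f n pp Vr \<epsilon> xs oc) = 1"
  using distribution_on.abort_outside_nonneg[OF distribution_on_dev_prob[OF assms]]
    distribution_on.sum_abort_outside[OF distribution_on_dev_prob[OF assms]]
  by (simp add: outcomes_def truncated_device_def)

lemma truncated_device_input_dist:
  assumes "\<forall>p\<in>Q. behavior p" "device_behavior Q n pp" "length xs = n" "0 \<le> w"
  shows "(\<Sum>oc\<in>outcomes n. \<bar>truncated_device f n pp Vr \<epsilon> xs oc * w - ext_prob n pp xs oc * w\<bar>)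
    = 2 * (w - w * sum (\<lambda>as. dev_prob n pp as xs)
                      {as\<in>{as. length as = n}. avg_bell f n pp as xs \<in> Vr as xs \<epsilon>})"
proof -
  have "ext_prob n pp xs = case_option 0 (\<lambda>as. dev_prob n pp as xs)"
    by (auto simp: ext_prob_def split: option.split)
  with \<open>0 \<le> w\<close> have "(\<Sum>oc\<in>outcomes n. \<bar>truncated_device f n pp Vr \<epsilon> xs oc * w - ext_prob n pp xs oc * w\<bar>)
      = (\<Sum>oc\<in>outcomes n. \<bar>truncated_device f n pp Vr \<epsilon> xs oc - case_option 0 (\<lambda>as. dev_prob n pp as xs) oc\<bar>) * w"
    by (simp add: sum_distrib_right abs_mult flip: left_diff_distrib)
  also have "\<dots> = 2 * (1 - sum (\<lambda>as. dev_prob n pp as xs)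
                      {as\<in>{as. length as = n}. avg_bell f n pp as xs \<in> Vr as xs \<epsilon>}) * w"
    unfolding outcomes_def truncated_device_def
      distribution_on.abort_outside_dist[OF distribution_on_dev_prob[OF assms(1-3)]] ..
  finally show ?thesis by (simp add: algebra_simps)
qed

lemma confidence_region_mass:
  assumes "confidence_region Q f \<pi> n \<epsilon> Vr" "device_behavior Q n pp"
  shows "1 - \<epsilon> \<le> (\<Sum>xs\<in>{xs. length xs = n}. input_prob \<pi> xs * sum (\<lambda>as. dev_prob n pp as xs)
                      {as\<in>{as. length as = n}. avg_bell f n pp as xs \<in> Vr as xs \<epsilon>})"
proof -
  let ?E = "\<lambda>as xs. avg_bell f n pp as xs \<in> Vr as xs \<epsilon>"
  have "1 - \<epsilon> \<le> (\<Sum>(as, xs) \<in> {(as, xs). length as = n \<and> length xs = n \<and> ?E as xs}.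
      dev_prob n pp as xs * input_prob \<pi> xs)"
    using assms unfolding confidence_region_def by blast
  also have "\<dots> = (\<Sum>xs\<in>{xs. length xs = n}. \<Sum>as\<in>{as\<in>{as. length as = n}. ?E as xs}.
      dev_prob n pp as xs * input_prob \<pi> xs)"
    using sum_pairs_filter[OF finite_lists_length finite_lists_length,
        where E = ?E and g = "\<lambda>as xs. dev_prob n pp as xs * input_prob \<pi> xs"] by simp
  finally show ?thesis
    by (simp add: sum_distrib_left mult.commute)
qed

lemma truncated_device_dist_le:
  fixes pp :: "'a::finite list \<Rightarrow> 'x::finite list \<Rightarrow> 'a \<Rightarrow> 'x \<Rightarrow> real"
  assumes Q_behaviors: "\<forall>p\<in>Q. behavior p" and dev: "device_behavior Q n pp"
    and pi_nonneg: "\<forall>x. 0 \<le> \<pi> x" and pi_sum: "(\<Sum>x\<in>UNIV. \<pi> x) = 1"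
    and CR: "confidence_region Q f \<pi> n \<epsilon> Vr"
  shows "(1 / 2) * (\<Sum>xs\<in>{xs. length xs = n}. \<Sum>oc\<in>outcomes n.
    \<bar>truncated_device f n pp Vr \<epsilon> xs oc * input_prob \<pi> xs - ext_prob n pp xs oc * input_prob \<pi> xs\<bar>) \<le> \<epsilon>"
proof -
  have input_total: "(\<Sum>xs\<in>{xs::'x list. length xs = n}. input_prob \<pi> xs) = 1"
    using sum_input_prob[where n = n and \<pi> = \<pi>] pi_sum by simp
  have "(\<Sum>oc\<in>outcomes n. \<bar>truncated_device f n pp Vr \<epsilon> xs oc * input_prob \<pi> xs
                          - ext_prob n pp xs oc * input_prob \<pi> xs\<bar>)
      = 2 * (input_prob \<pi> xs - input_prob \<pi> xs * sum (\<lambda>as. dev_prob n pp as xs)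
                      {as\<in>{as. length as = n}. avg_bell f n pp as xs \<in> Vr as xs \<epsilon>})"
    if "xs \<in> {xs. length xs = n}" for xs
    using that pi_nonneg by (intro truncated_device_input_dist[OF Q_behaviors dev] input_prob_nonneg) auto
  then show ?thesis
    using half_sum_deficit_le[OF input_total confidence_region_mass[OF CR dev]] by (simp only: cong: sum.cong)
qed

lemma truncated_device_rate:
  assumes Q_behaviors: "\<forall>p\<in>Q. behavior p"
    and Q_convex: "\<forall>p1\<in>Q. \<forall>p2\<in>Q. \<forall>q\<in>{0..1}. (\<lambda>a x. q * p1 a x + (1 - q) * p2 a x) \<in> Q"
    and RB: "RB_function Q f Xr H" and HV: "HV_of Q f H HV"
    and eta: "\<forall>p\<in>Q. H (bell_vec f p) \<le> \<eta>"
    and dev: "device_behavior Q n pp" and lengths: "length xs = n" "length as = n"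
  shows "ereal (real n * HV (Vr as xs \<epsilon>) - real (nu Xr xs) * \<eta>)
    \<le> neglog2 (truncated_device f n pp Vr \<epsilon> xs (Some as))"
proof (cases "avg_bell f n pp as xs \<in> Vr as xs \<epsilon>")
  case True
  then have "real n * HV (Vr as xs \<epsilon>) \<le> (\<Sum>j<n. H (bell_vec f (pp (take j as) (take j xs))))"
    using HV_le_average_rate[OF Q_convex RB HV dev lengths(2,1)] by blast
  then have "ereal (real n * HV (Vr as xs \<epsilon>) - real (nu Xr xs) * \<eta>)
      \<le> ereal ((\<Sum>j<n. H (bell_vec f (pp (take j as) (take j xs)))) - real (nu Xr xs) * \<eta>)"
    by simp
  also have "\<dots> \<le> neglog2 (dev_prob n pp as xs)"
    by (rule neglog2_dev_prob_ge[OF Q_behaviors RB eta dev lengths(2,1)])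
  also have "dev_prob n pp as xs = truncated_device f n pp Vr \<epsilon> xs (Some as)"
    using True by (simp add: truncated_device_def abort_outside_def)
  finally show ?thesis .
qed (simp add: truncated_device_def abort_outside_def neglog2_def)

theorem lemma3:
  fixes Q :: "('a::finite \<Rightarrow> 'x::finite \<Rightarrow> real) set"
    and f :: "'t::finite \<Rightarrow> 'a \<Rightarrow> 'x \<Rightarrow> real"
    and Xr :: "'x set"
    and H :: "real^'t \<Rightarrow> real"
    and HV :: "(real^'t) set \<Rightarrow> real"
    and \<eta> :: real
    and \<pi> :: "'x \<Rightarrow> real"
    and n :: nat
    and \<epsilon> :: real
    and Vr :: "'a list \<Rightarrow> 'x list \<Rightarrow> real \<Rightarrow> (real^'t) set"
    and pp :: "'a list \<Rightarrow> 'x list \<Rightarrow> 'a \<Rightarrow> 'x \<Rightarrow> real"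
  assumes Q_behaviors: "\<forall>p\<in>Q. behavior p"
    and Q_convex: "\<forall>p1\<in>Q. \<forall>p2\<in>Q. \<forall>q\<in>{0..1}. (\<lambda>a x. q * p1 a x + (1 - q) * p2 a x) \<in> Q"
    and RB: "RB_function Q f Xr H"
    and HV: "HV_of Q f H HV"
    and eta: "\<forall>p\<in>Q. H (bell_vec f p) \<le> \<eta>"
    and pi_nonneg: "\<forall>x. 0 \<le> \<pi> x"
    and pi_sum: "(\<Sum>x\<in>UNIV. \<pi> x) = 1"
    and CR: "confidence_region Q f \<pi> n \<epsilon> Vr"
    and dev: "device_behavior Q n pp"
  shows "\<exists>Pt :: 'x list \<Rightarrow> 'a list option \<Rightarrow> real.
     (\<forall>xs. length xs = n \<longrightarrow>
        (\<forall>oc\<in>outcomes n. 0 \<le> Pt xs oc) \<and> (\<Sum>oc\<in>outcomes n. Pt xs oc) = 1)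
   \<and> (1 / 2) * (\<Sum>xs\<in>{xs. length xs = n}. \<Sum>oc\<in>outcomes n.
        \<bar>Pt xs oc * input_prob \<pi> xs - ext_prob n pp xs oc * input_prob \<pi> xs\<bar>) \<le> \<epsilon>
   \<and> (\<forall>xs as. length xs = n \<longrightarrow> length as = n \<longrightarrow>
        ereal (real n * HV (Vr as xs \<epsilon>) - real (nu Xr xs) * \<eta>) \<le> neglog2 (Pt xs (Some as)))"
proof -
  let ?Pt = "truncated_device f n pp Vr \<epsilon>"
  have distribution: "\<forall>xs. length xs = n \<longrightarrow>
      (\<forall>oc\<in>outcomes n. 0 \<le> ?Pt xs oc) \<and> (\<Sum>oc\<in>outcomes n. ?Pt xs oc) = 1"
    using truncated_device_distribution[OF Q_behaviors dev] by blast
  have rate: "\<forall>xs as. length xs = n \<longrightarrow> length as = n \<longrightarrow>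
      ereal (real n * HV (Vr as xs \<epsilon>) - real (nu Xr xs) * \<eta>) \<le> neglog2 (?Pt xs (Some as))"
    using truncated_device_rate[OF Q_behaviors Q_convex RB HV eta dev] by blast
  show ?thesis
    by (rule exI[of _ ?Pt])
      (intro conjI distribution rate truncated_device_dist_le[OF Q_behaviors dev pi_nonneg pi_sum CR])
qed

end
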